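(* Let $G$ be a flat affine group scheme over $R$, $N\to G$ the automatic blowup of the identity, and $\varepsilon_K:K[G]\to K$ the counit. Then $R[N]=\{f\in K[G]:\varepsilon_K(f)\in R\}$; equivalently, the first projection $K[G]\times_{\varepsilon_K,K}R\to K[G]$ is an isomorphism onto $R[N]$. Geometrically, $N\simeq G_K\amalg_{e,\mathrm{Spec}\,K}\mathrm{Spec}\,R$ as $R$-schemes (pushout of $G_K\xleftarrow{e}\mathrm{Spec}\,K\to\mathrm{Spec}\,R$).
   Context: $R$ is a discrete valuation ring with uniformizer $\pi$, fraction field $K$, residue field $k$; $R[G]\subset K[G]$ for flat $G$. The Neron blowup of a flat affine group scheme $H$ at a closed subgroup of $H\otimes k$ with ideal $J\subset R[H]$ (inverse image of its ideal) is $\mathrm{Spec}$ of the subring of $K[H]$ generated by $R[H]$ and $\pi^{-1}J$. The automatic blowup of the identity $N\to G$ is the limit of $\cdots\to G_{n+1}\to G_n\to\cdots\to G_0=G$, where $G_{n+1}\to G_n$ is the Neron blowup of $G_n$ at $\{e\}\subset G_n\otimes k$. *)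

theory Defs
  imports Main
begin

definition subring_of :: "'a::comm_ring_1 set \<Rightarrow> bool" where
  "subring_of B \<longleftrightarrow> 0 \<in> B \<and> 1 \<in> B \<and>
     (\<forall>x\<in>B. \<forall>y\<in>B. x + y \<in> B \<and> x - y \<in> B \<and> x * y \<in> B)"

definition subring_gen :: "'a::comm_ring_1 set \<Rightarrow> 'a set" where
  "subring_gen S = \<Inter> {B. subring_of B \<and> S \<subseteq> B}"

text \<open>R is a discrete valuation ring with uniformizer pi and fraction field K
  (= the ambient field type 'k): R is a subring of K, and every nonzero x in K
  is uniquely u * pi^n with n an integer and u a unit of R; R consists of 0 and
  the elements with n >= 0.\<close>
definition dvr :: "'k::field set \<Rightarrow> 'k \<Rightarrow> bool" where
  "dvr R pi \<longleftrightarrow> subring_of R \<and> pi \<in> R \<and> pi \<noteq> 0 \<and>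
     (\<forall>x. x \<noteq> 0 \<longrightarrow> (\<exists>!p. fst p \<in> R \<and> inverse (fst p) \<in> R \<and>
                              x = fst p * pi powi snd p)) \<and>
     R = insert 0 {u * pi ^ n | u n. u \<in> R \<and> inverse u \<in> R}"

text \<open>A = R[H] inside L = K[G]; eps = counit of K[G] (restricting to that of R[H]);
  J = {f in R[H]. eps f in pi R} is the inverse image of the ideal of the
  identity section of H tensor k; the new ring is generated by A and pi^{-1} J.\<close>
definition neron_blowup_id ::
  "('k::field \<Rightarrow> 'a::comm_ring_1) \<Rightarrow> ('a \<Rightarrow> 'k) \<Rightarrow> 'k set \<Rightarrow> 'k \<Rightarrow> 'a set \<Rightarrow> 'a set" where
  "neron_blowup_id iota eps R pi A =
     subring_gen (A \<union> {iota (inverse pi) * f | f. f \<in> A \<and> eps f \<in> (\<lambda>r. pi * r) ` R})"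

primrec auto_blowup_ring ::
  "('k::field \<Rightarrow> 'a::comm_ring_1) \<Rightarrow> ('a \<Rightarrow> 'k) \<Rightarrow> 'k set \<Rightarrow> 'k \<Rightarrow> 'a set \<Rightarrow> nat \<Rightarrow> 'a set" where
  "auto_blowup_ring iota eps R pi A0 0 = A0"
| "auto_blowup_ring iota eps R pi A0 (Suc n) =
     neron_blowup_id iota eps R pi (auto_blowup_ring iota eps R pi A0 n)"

text \<open>R[N] = colimit (union inside K[G]) of the R[G_n].\<close>
definition auto_blowup_limit_ring ::
  "('k::field \<Rightarrow> 'a::comm_ring_1) \<Rightarrow> ('a \<Rightarrow> 'k) \<Rightarrow> 'k set \<Rightarrow> 'k \<Rightarrow> 'a set \<Rightarrow> 'a set" where
  "auto_blowup_limit_ring iota eps R pi A0 = (\<Union>n. auto_blowup_ring iota eps R pi A0 n)"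

end

theory Submission
  imports Defs
begin

text \<open>
  Each blowup step only adjoins quotients \<open>\<pi>\<^sup>-\<^sup>1 f\<close> with \<open>\<epsilon>(f) \<in> \<pi>R\<close>, so \<open>\<epsilon>\<close> stays
  \<open>R\<close>-valued on every ring of the tower and hence on their union. Conversely, if
  \<open>\<epsilon>(f) \<in> R\<close> then \<open>\<pi>\<^sup>m f \<in> R[G]\<close> for some \<open>m\<close>, and for \<open>k \<ge> 1\<close> the counit of
  \<open>\<pi>\<^sup>k f\<close> lies in \<open>\<pi>R\<close>; so the \<open>m\<close> successive blowups divide out one factor
  \<open>\<pi>\<close> each and put \<open>f\<close> into \<open>R[G\<^sub>m]\<close>.
\<close>

lemma subring_gen_superset: "S \<subseteq> subring_gen S"
  unfolding subring_gen_def by blast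

lemma subring_gen_least: "subring_of B \<Longrightarrow> S \<subseteq> B \<Longrightarrow> subring_gen S \<subseteq> B"
  unfolding subring_gen_def by blast

lemma subring_of_power: "subring_of R \<Longrightarrow> p \<in> R \<Longrightarrow> p ^ n \<in> R"
  by (induction n) (auto simp: subring_of_def)

lemma subring_of_vimage:
  fixes eps :: "'a::comm_ring_1 \<Rightarrow> 'b::comm_ring_1"
  assumes "subring_of R"
    and "eps 1 = 1" "\<And>f g. eps (f + g) = eps f + eps g" "\<And>f g. eps (f * g) = eps f * eps g"
  shows "subring_of {f. eps f \<in> R}"
proof -
  have "eps 0 = 0"
    using assms(3)[of 0 0] by simp
  moreover have "eps (f - g) = eps f - eps g" for f g
    using assms(3)[of "f - g" g] by (simp add: algebra_simps)
  ultimately show ?thesis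
    using assms unfolding subring_of_def by auto
qed

locale identity_blowup_setting =
  fixes iota :: "'k::field \<Rightarrow> 'a::comm_ring_1" and eps :: "'a \<Rightarrow> 'k"
    and R :: "'k set" and pi :: 'k
  assumes subring_R: "subring_of R" and pi_in_R: "pi \<in> R" and pi_nonzero: "pi \<noteq> 0"
    and iota_one: "iota 1 = 1" and iota_mult: "\<And>x y. iota (x * y) = iota x * iota y"
    and eps_one: "eps 1 = 1" and eps_add: "\<And>f g. eps (f + g) = eps f + eps g"
    and eps_mult: "\<And>f g. eps (f * g) = eps f * eps g"
    and eps_iota: "\<And>c. eps (iota c) = c"
begin

abbreviation blowup :: "'a set \<Rightarrow> 'a set" where
  "blowup \<equiv> neron_blowup_id iota eps R pi"

abbreviation tower :: "'a set \<Rightarrow> nat \<Rightarrow> 'a set" where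
  "tower \<equiv> auto_blowup_ring iota eps R pi"

lemma eps_iota_mult: "eps (iota c * f) = c * eps f"
  by (simp add: eps_mult eps_iota)

lemma inverse_pi_mult_in_blowup:
  assumes "f \<in> A" "eps f \<in> (\<lambda>r. pi * r) ` R"
  shows "iota (inverse pi) * f \<in> blowup A"
  unfolding neron_blowup_id_def using assms by (intro subsetD[OF subring_gen_superset] UnI2) blast

lemma blowup_subset_eps_integral:
  assumes "A \<subseteq> {f. eps f \<in> R}"
  shows "blowup A \<subseteq> {f. eps f \<in> R}"
  unfolding neron_blowup_id_def
proof (rule subring_gen_least)
  show "subring_of {f. eps f \<in> R}"
    using subring_of_vimage[OF subring_R eps_one eps_add eps_mult] .
  have "eps (iota (inverse pi) * (f :: 'a)) = r" if "eps f = pi * r" for f r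
    using that pi_nonzero by (simp add: eps_iota_mult)
  then show "A \<union> {iota (inverse pi) * f |f. f \<in> A \<and> eps f \<in> (\<lambda>r. pi * r) ` R}
      \<subseteq> {f. eps f \<in> R}"
    using assms by auto
qed

lemma tower_subset_eps_integral:
  "eps ` A0 \<subseteq> R \<Longrightarrow> tower A0 n \<subseteq> {f. eps f \<in> R}"
proof (induction n)
  case (Suc n)
  then show ?case using blowup_subset_eps_integral by simp
qed auto

lemma blowup_divides_pi:
  assumes "eps f \<in> R" "iota (pi ^ Suc m) * f \<in> A"
  shows "iota (pi ^ m) * f \<in> blowup A"
proof -
  have "pi ^ m * eps f \<in> R"
    using assms(1) subring_of_power[OF subring_R pi_in_R] subring_R
    unfolding subring_of_def by blast
  moreover have "eps (iota (pi ^ Suc m) * f) = pi * (pi ^ m * eps f)"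
    by (simp add: eps_iota_mult mult.assoc)
  ultimately have "eps (iota (pi ^ Suc m) * f) \<in> (\<lambda>r. pi * r) ` R"
    by (simp only: imageI)
  then have "iota (inverse pi) * (iota (pi ^ Suc m) * f) \<in> blowup A"
    by (rule inverse_pi_mult_in_blowup[OF assms(2)])
  moreover have "inverse pi * pi ^ Suc m = pi ^ m"
    using pi_nonzero by simp
  ultimately show ?thesis
    by (metis iota_mult mult.assoc)
qed

lemma tower_divides_pi_power:
  "eps f \<in> R \<Longrightarrow> iota (pi ^ m) * f \<in> tower A0 n \<Longrightarrow> f \<in> tower A0 (n + m)"
proof (induction m arbitrary: n)
  case 0
  then show ?case by (simp add: iota_one)
next
  case (Suc m)
  then have "iota (pi ^ m) * f \<in> tower A0 (Suc n)"
    by (simp add: blowup_divides_pi)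
  from Suc.IH[OF Suc.prems(1) this] show ?case by simp
qed

end

theorem corollary2p21:
  fixes R :: "'k::field set" and pi :: 'k
    and iota :: "'k \<Rightarrow> 'a::comm_ring_1"
    and eps :: "'a \<Rightarrow> 'k"
    and A0 :: "'a set"
  assumes dvr: "dvr R pi"
    and iota_hom: "iota 1 = 1" "\<And>x y. iota (x + y) = iota x + iota y"
                  "\<And>x y. iota (x * y) = iota x * iota y"
    and eps_hom: "eps 1 = 1" "\<And>f g. eps (f + g) = eps f + eps g"
                 "\<And>f g. eps (f * g) = eps f * eps g"
    and eps_lin: "\<And>c. eps (iota c) = c"
    and A0_sub: "subring_of A0"
    and A0_R: "iota ` R \<subseteq> A0"
    and A0_gen: "\<And>f. \<exists>m::nat. iota (pi ^ m) * f \<in> A0"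
    and eps_A0: "eps ` A0 \<subseteq> R"
  shows "auto_blowup_limit_ring iota eps R pi A0 = {f. eps f \<in> R}"
proof -
  have "subring_of R" "pi \<in> R" "pi \<noteq> 0"
    using dvr unfolding dvr_def by blast+
  then interpret identity_blowup_setting iota eps R pi
    using iota_hom eps_hom eps_lin by unfold_locales
  have "f \<in> (\<Union>n. tower A0 n)" if "eps f \<in> R" for f
  proof -
    obtain m where "iota (pi ^ m) * f \<in> tower A0 0"
      using A0_gen by auto
    then have "f \<in> tower A0 (0 + m)"
      by (rule tower_divides_pi_power[OF that])
    then show ?thesis by blast
  qed
  then show ?thesis
    unfolding auto_blowup_limit_ring_def
    using tower_subset_eps_integral[OF eps_A0] by blast
qed

end
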